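(* For every integer $g\ge1$, there are at most $2^{g-1}$ numerical semigroups of genus $g$.
   Context: A numerical semigroup is a submonoid $S$ of $(\mathbb N,+)$ with finite complement; its genus is $\#(\mathbb N\setminus S)$. *)

theory Defs
  imports Main
begin

definition numerical_semigroup :: "nat set \<Rightarrow> bool" where
  "numerical_semigroup S \<longleftrightarrow>
     0 \<in> S \<and> (\<forall>a\<in>S. \<forall>b\<in>S. a + b \<in> S) \<and> finite (UNIV - S)"

definition genus :: "nat set \<Rightarrow> nat" where
  "genus S = card (UNIV - S)"

end

theory Submission
  imports Defs
begin

text \<open>Fix a positive element m of S. As S + m is contained in S, the gaps congruent to i
  modulo m are exactly i, i + m, ..., i + (k_i - 1) m for some k_i, so S is determined by m and
  the Kunz coordinates k_1, ..., k_(m-1) (while k_0 = 0), and the genus is their sum. When m is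
  the multiplicity, 1, ..., m - 1 are gaps, so every k_i is positive: S is encoded injectively
  by a composition of its genus g, and g has 2^(g-1) compositions.\<close>

definition compositions :: "nat \<Rightarrow> nat list set" where
  "compositions n = {xs. (\<forall>x\<in>set xs. 0 < x) \<and> sum_list xs = n}"

lemma length_le_sum_list_pos:
  "\<forall>x\<in>set xs. 0 < x \<Longrightarrow> length xs \<le> sum_list (xs :: nat list)"
  by (induction xs) auto

lemma finite_compositions: "finite (compositions n)"
proof (rule finite_subset)
  show "compositions n \<subseteq> {xs. set xs \<subseteq> {..n} \<and> length xs \<le> n}"
    using length_le_sum_list_pos member_le_sum_list by (fastforce simp: compositions_def)
qed (rule finite_lists_length_le, simp)

lemma compositions_Suc_0: "compositions (Suc 0) = {[1]}"
proof -
  have "xs = [1]" if "\<forall>x\<in>set xs. 0 < x" "sum_list xs = Suc 0" for xs :: "nat list"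
    using that length_le_sum_list_pos[OF that(1)] by (cases xs) auto
  then show ?thesis by (auto simp: compositions_def)
qed

lemma compositions_Suc_Suc_subset:
  "compositions (Suc (Suc n)) \<subseteq>
     Cons 1 ` compositions (Suc n) \<union> (\<lambda>xs. Suc (hd xs) # tl xs) ` compositions (Suc n)"
    (is "_ \<subseteq> Cons 1 ` ?C \<union> ?enlarge ` ?C")
proof
  fix xs assume xs: "xs \<in> compositions (Suc (Suc n))"
  then obtain k ys where xs_eq: "xs = k # ys" by (cases xs) (auto simp: compositions_def)
  show "xs \<in> Cons 1 ` ?C \<union> ?enlarge ` ?C"
  proof (cases "k = 1")
    case True
    then have "ys \<in> ?C" using xs xs_eq by (auto simp: compositions_def)
    then show ?thesis using xs_eq True by blast
  next
    case False
    then have "(k - 1) # ys \<in> ?C" "xs = ?enlarge ((k - 1) # ys)"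
      using xs xs_eq by (auto simp: compositions_def)
    then show ?thesis by blast
  qed
qed

lemma card_compositions_le: "card (compositions (Suc n)) \<le> 2 ^ n"
proof (induction n)
  case 0
  then show ?case by (simp add: compositions_Suc_0)
next
  case (Suc n)
  let ?C = "compositions (Suc n)"
  have "card (compositions (Suc (Suc n)))
          \<le> card (Cons 1 ` ?C \<union> (\<lambda>xs. Suc (hd xs) # tl xs) ` ?C)"
    by (intro card_mono compositions_Suc_Suc_subset) (simp add: finite_compositions)
  also have "\<dots> \<le> card (Cons 1 ` ?C) + card ((\<lambda>xs. Suc (hd xs) # tl xs) ` ?C)"
    by (rule card_Un_le)
  also have "\<dots> \<le> card ?C + card ?C"
    by (intro add_mono card_image_le finite_compositions)
  also have "\<dots> \<le> 2 ^ Suc n" using Suc.IH by simp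
  finally show ?case .
qed

lemma numerical_semigroup_zero: "numerical_semigroup S \<Longrightarrow> 0 \<in> S"
  by (simp add: numerical_semigroup_def)

lemma numerical_semigroup_add: "numerical_semigroup S \<Longrightarrow> a \<in> S \<Longrightarrow> b \<in> S \<Longrightarrow> a + b \<in> S"
  by (simp add: numerical_semigroup_def)

lemma numerical_semigroup_finite_gaps: "numerical_semigroup S \<Longrightarrow> finite (UNIV - S)"
  by (simp add: numerical_semigroup_def)

lemma numerical_semigroup_add_mult:
  assumes "numerical_semigroup S" "m \<in> S" "x \<in> S"
  shows "x + k * m \<in> S"
proof (induction k)
  case (Suc k)
  then have "(x + k * m) + m \<in> S" using assms numerical_semigroup_add by blast
  then show ?case by (simp add: algebra_simps)
qed (use assms in simp)

definition kunz :: "nat set \<Rightarrow> nat \<Rightarrow> nat \<Rightarrow> nat" where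
  "kunz S m i = card {j. i + j * m \<notin> S}"

lemma finite_down_closed_eq_lessThan:
  fixes D :: "nat set"
  assumes "finite D" and down: "\<And>j j'. j \<in> D \<Longrightarrow> j' < j \<Longrightarrow> j' \<in> D"
  shows "D = {..<card D}"
proof -
  define n where "n = (LEAST k. k \<notin> D)"
  have "\<exists>k. k \<notin> D" using assms(1) by (meson ex_new_if_finite infinite_UNIV_nat)
  then have "n \<notin> D" unfolding n_def by (rule LeastI_ex)
  then have "D \<subseteq> {..<n}" using down linorder_less_linear by blast
  moreover have "{..<n} \<subseteq> D" unfolding n_def using not_less_Least by blast
  ultimately show ?thesis by simp
qed

lemma kunz_gap_indices:
  assumes S: "numerical_semigroup S" and m: "m \<in> S" "0 < m"
  shows "{j. i + j * m \<notin> S} = {..<kunz S m i}"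
  unfolding kunz_def
proof (rule finite_down_closed_eq_lessThan)
  have "inj (\<lambda>j. i + j * m)" using m by (auto intro: injI)
  moreover have "(\<lambda>j. i + j * m) ` {j. i + j * m \<notin> S} \<subseteq> UNIV - S" by auto
  then have "finite ((\<lambda>j. i + j * m) ` {j. i + j * m \<notin> S})"
    using numerical_semigroup_finite_gaps[OF S] by (rule finite_subset)
  ultimately show "finite {j. i + j * m \<notin> S}"
    using finite_imageD inj_on_subset by blast
next
  fix j j' assume j: "j \<in> {j. i + j * m \<notin> S}" and "j' < j"
  have eq: "i + j * m = (i + j' * m) + (j - j') * m"
    using \<open>j' < j\<close> by (simp add: diff_mult_distrib)
  show "j' \<in> {j. i + j * m \<notin> S}"
    unfolding mem_Collect_eq
  proof
    assume "i + j' * m \<in> S"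
    then have "i + j * m \<in> S"
      unfolding eq by (rule numerical_semigroup_add_mult[OF S m(1)])
    then show False using j by simp
  qed
qed

lemma not_in_iff_kunz:
  assumes "numerical_semigroup S" "m \<in> S" "0 < m"
  shows "x \<notin> S \<longleftrightarrow> x div m < kunz S m (x mod m)"
proof -
  have "x \<notin> S \<longleftrightarrow> x div m \<in> {j. x mod m + j * m \<notin> S}" by simp
  then show ?thesis unfolding kunz_gap_indices[OF assms] by simp
qed

lemma kunz_zero:
  assumes "numerical_semigroup S" "m \<in> S" "0 < m"
  shows "kunz S m 0 = 0"
  using not_in_iff_kunz[OF assms, of 0] numerical_semigroup_zero[OF assms(1)] by simp

lemma genus_eq_sum_kunz:
  assumes S: "numerical_semigroup S" and m: "m \<in> S" "0 < m"
  shows "genus S = (\<Sum>i<m. kunz S m i)"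
proof -
  let ?split = "\<lambda>x. (x mod m, x div m)"
  let ?grid = "SIGMA i:{..<m}. {..<kunz S m i}"
  have "inj_on ?split (UNIV - S)" by (rule inj_onI) (metis Pair_inject div_mult_mod_eq)
  then have "genus S = card (?split ` (UNIV - S))" by (simp add: genus_def card_image)
  also have "?split ` (UNIV - S) = ?grid"
  proof
    show "?split ` (UNIV - S) \<subseteq> ?grid"
    proof
      fix p assume "p \<in> ?split ` (UNIV - S)"
      then obtain x where "x \<notin> S" "p = ?split x" by blast
      then show "p \<in> ?grid" using not_in_iff_kunz[OF S m, of x] m by simp
    qed
  next
    show "?grid \<subseteq> ?split ` (UNIV - S)"
    proof
      fix p assume "p \<in> ?grid"
      then obtain i j where p: "p = (i, j)" "i < m" "j < kunz S m i" by auto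
      then have "i + j * m \<notin> S" using not_in_iff_kunz[OF S m, of "i + j * m"] by simp
      then show "p \<in> ?split ` (UNIV - S)"
        by (intro rev_image_eqI[of "i + j * m"]) (use p in auto)
    qed
  qed
  finally show ?thesis by simp
qed

definition multiplicity :: "nat set \<Rightarrow> nat" where
  "multiplicity S = (LEAST x. x \<in> S \<and> 0 < x)"

lemma numerical_semigroup_ex_pos:
  assumes "numerical_semigroup S"
  shows "\<exists>x. x \<in> S \<and> 0 < x"
proof (rule ccontr)
  assume "\<nexists>x. x \<in> S \<and> 0 < x"
  then have "UNIV - {0} \<subseteq> UNIV - S" by auto
  then have "finite (UNIV - {0 :: nat})"
    using numerical_semigroup_finite_gaps[OF assms] finite_subset by blast
  then show False by simp
qed

lemma
  assumes "numerical_semigroup S"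
  shows multiplicity_in: "multiplicity S \<in> S"
    and multiplicity_pos: "0 < multiplicity S"
    and not_in_below_multiplicity: "0 < x \<Longrightarrow> x < multiplicity S \<Longrightarrow> x \<notin> S"
proof -
  have "multiplicity S \<in> S \<and> 0 < multiplicity S"
    unfolding multiplicity_def using numerical_semigroup_ex_pos[OF assms] by (rule LeastI_ex)
  then show "multiplicity S \<in> S" "0 < multiplicity S" by auto
  show "0 < x \<Longrightarrow> x < multiplicity S \<Longrightarrow> x \<notin> S"
    unfolding multiplicity_def using not_less_Least by blast
qed

definition kunz_coordinates :: "nat set \<Rightarrow> nat list" where
  "kunz_coordinates S = map (kunz S (multiplicity S)) [1..<multiplicity S]"

lemma kunz_coordinates_in_compositions:
  assumes S: "numerical_semigroup S"
  shows "kunz_coordinates S \<in> compositions (genus S)"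
proof -
  let ?m = "multiplicity S"
  note m = multiplicity_in[OF S] multiplicity_pos[OF S]
  have "0 < kunz S ?m i" if "0 < i" "i < ?m" for i
    using not_in_iff_kunz[OF S m, of i] not_in_below_multiplicity[OF S that] that by simp
  then have "\<forall>x\<in>set (kunz_coordinates S). 0 < x" by (auto simp: kunz_coordinates_def)
  moreover have "sum_list (kunz_coordinates S) = genus S"
  proof -
    have "genus S = (\<Sum>i<?m. kunz S ?m i)" by (rule genus_eq_sum_kunz[OF S m])
    also have "\<dots> = (\<Sum>i\<in>{1..<?m}. kunz S ?m i)"
      using m kunz_zero[OF S m] by (simp add: sum.atLeast_Suc_lessThan atLeast0LessThan[symmetric])
    finally show ?thesis by (simp add: kunz_coordinates_def interv_sum_list_conv_sum_set_nat)
  qed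
  ultimately show ?thesis by (simp add: compositions_def)
qed

lemma kunz_coordinates_inj: "inj_on kunz_coordinates {S. numerical_semigroup S}"
proof (rule inj_onI, clarsimp)
  fix S T assume S: "numerical_semigroup S" and T: "numerical_semigroup T"
    and eq: "kunz_coordinates S = kunz_coordinates T"
  let ?m = "multiplicity S"
  note mS = multiplicity_in[OF S] multiplicity_pos[OF S]
  have "length (kunz_coordinates S) = length (kunz_coordinates T)" using eq by simp
  then have m_eq: "multiplicity T = ?m"
    using mS(2) multiplicity_pos[OF T] by (simp add: kunz_coordinates_def)
  have mT: "?m \<in> T" "0 < ?m" using multiplicity_in[OF T] mS(2) m_eq by auto
  have "kunz S ?m i = kunz T ?m i" if "i < ?m" for i
  proof (cases "i = 0")
    case True
    then show ?thesis using kunz_zero[OF S mS] kunz_zero[OF T mT] by simp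
  next
    case False
    then have "kunz_coordinates S ! (i - 1) = kunz S ?m i"
      and "kunz_coordinates T ! (i - 1) = kunz T ?m i"
      using that m_eq by (simp_all add: kunz_coordinates_def)
    then show ?thesis using eq by simp
  qed
  then have "x \<notin> S \<longleftrightarrow> x \<notin> T" for x
    using not_in_iff_kunz[OF S mS, of x] not_in_iff_kunz[OF T mT, of x] mS(2) by simp
  then show "S = T" by blast
qed

theorem corollary2p2:
  fixes g :: nat
  assumes "g \<ge> 1"
  shows "finite {S. numerical_semigroup S \<and> genus S = g} \<and>
         card {S. numerical_semigroup S \<and> genus S = g} \<le> 2 ^ (g - 1)"
proof -
  let ?A = "{S. numerical_semigroup S \<and> genus S = g}"
  have inj: "inj_on kunz_coordinates ?A"
    by (rule inj_on_subset[OF kunz_coordinates_inj]) auto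
  have sub: "kunz_coordinates ` ?A \<subseteq> compositions g"
    using kunz_coordinates_in_compositions by auto
  then have "finite ?A"
    using inj finite_compositions finite_imageD finite_subset by blast
  moreover have "card ?A \<le> card (compositions g)"
    using card_inj_on_le[OF inj sub finite_compositions] .
  moreover have "card (compositions g) \<le> 2 ^ (g - 1)"
    using card_compositions_le[of "g - 1"] assms by simp
  ultimately show ?thesis by simp
qed

end
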